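(* Let $p/q$ be a rational number. For real $\varepsilon\neq0$ small, let $z_\varepsilon$ be a point of $\mathcal C_{p/q}(p/q+\varepsilon)$ and $Q_\varepsilon(w)=\frac{1}{z_\varepsilon}P_{p/q+\varepsilon}(z_\varepsilon w)$. Then $$Q_\varepsilon^{\circ q}(w)=w+2i\pi q\varepsilon\, w(1-w^q)+\varepsilon R_\varepsilon(w),$$ where $R_\varepsilon\to0$ uniformly on compact subsets of $\mathbb C$ as $\varepsilon\to0$.
   Context: $P_\alpha(z)=e^{2i\pi\alpha}z+z^2$. The cycle $\mathcal C_{p/q}(\alpha)$: with $\zeta=e^{2i\pi p/q}$ there is an analytic $\chi_{p/q}:B(0,q^{-3/q})\to\mathbb C$, $\chi_{p/q}(0)=0$, such that for $\delta\ne0$, $\chi_{p/q}(\delta)\neq0$ and $\{\chi_{p/q}(\zeta^k\delta)\}_{0\le k<q}$ is a cycle of period $q$ of $P_{p/q+\delta^q}$; $\mathcal C_{p/q}(\alpha)=\chi_{p/q}(\{\delta:\delta^q=\alpha-p/q\})$ for $|\alpha-p/q|<1/q^3$. *)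

theory Defs
  imports "HOL-Analysis.Analysis"
begin

definition Pol :: "complex \<Rightarrow> complex \<Rightarrow> complex" where
  "Pol \<alpha> z = exp (2 * pi * \<i> * \<alpha>) * z + z ^ 2"

definition is_cycle :: "(complex \<Rightarrow> complex) \<Rightarrow> nat \<Rightarrow> complex set \<Rightarrow> bool" where
  "is_cycle f n S \<longleftrightarrow> (\<exists>z. S = {(f ^^ j) z | j. j < n} \<and> (f ^^ n) z = z \<and> card S = n)"

text \<open>The properties of the parametrization chi_{p/q} from the paper.\<close>
definition chi_admissible :: "int \<Rightarrow> nat \<Rightarrow> (complex \<Rightarrow> complex) \<Rightarrow> bool" where
  "chi_admissible p q chi \<longleftrightarrow>
     (let r = real q powr (- 3 / real q); \<zeta> = exp (2 * pi * \<i> * (of_int p / of_nat q)) in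
      chi analytic_on ball 0 r \<and> chi 0 = 0 \<and>
      (\<forall>\<delta>\<in>ball 0 r. \<delta> \<noteq> 0 \<longrightarrow>
          chi \<delta> \<noteq> 0 \<and>
          is_cycle (Pol (of_int p / of_nat q + \<delta> ^ q)) q {chi (\<zeta> ^ k * \<delta>) | k. k < q}))"

definition cyc :: "int \<Rightarrow> nat \<Rightarrow> (complex \<Rightarrow> complex) \<Rightarrow> complex \<Rightarrow> complex set" where
  "cyc p q chi \<alpha> = chi ` {\<delta>. \<delta> ^ q = \<alpha> - of_int p / of_nat q}"

end

(*
  Write f_mu(u) = mu u + u^2, so that P_alpha = f_mu with mu = exp(2 pi i alpha), and let
  zeta = exp(2 pi i p/q), a primitive q-th root of unity. The iterate F = f_zeta^q commutes
  with f_zeta; if F(u) = u + u^(k+1) h(u) with h(0) <> 0, comparing the coefficients of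
  u^(k+1) in F o f_zeta = f_zeta o F gives zeta^k = 1, hence q divides k and
  F(u) = u + u^(q+1) H(u) with H a polynomial. For mu near zeta this becomes
  f_mu^q(u) = mu^q u + u^(q+1) H(u) + (mu - zeta) u^2 K(mu, u) with K bounded.

  A point z of the cycle is chi(delta) with delta^q = epsilon, so z is a fixed point of
  f_mu^q with |z|^q = O(epsilon). Using f_mu^q(z) = z to eliminate H(z),
  f_mu^q(z w)/z - w - (mu^q - 1)(w - w^(q+1)) is O(epsilon |z|) uniformly for bounded w,
  and mu^q - 1 = 2 pi i q epsilon + o(epsilon).
*)
theory Submission
  imports Defs "HOL-Complex_Analysis.Cauchy_Integral_Formula"
begin

section \<open>Iterates of the quadratic family\<close>

definition quad :: "complex \<Rightarrow> complex \<Rightarrow> complex" where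
  "quad \<mu> u = \<mu> * u + u ^ 2"

lemma Pol_eq_quad: "Pol \<alpha> = quad (exp (2 * pi * \<i> * \<alpha>))"
  by (simp add: fun_eq_iff Pol_def quad_def)

fun quad_tail :: "nat \<Rightarrow> complex \<Rightarrow> complex \<Rightarrow> complex" where
  "quad_tail 0 \<mu> u = 0"
| "quad_tail (Suc n) \<mu> u = \<mu> * quad_tail n \<mu> u + (\<mu> ^ n + u * quad_tail n \<mu> u) ^ 2"

lemma funpow_quad: "(quad \<mu> ^^ n) u = \<mu> ^ n * u + u ^ 2 * quad_tail n \<mu> u"
  by (induction n) (simp_all add: quad_def power2_eq_square algebra_simps)

fun quad_tail_slope :: "nat \<Rightarrow> complex \<Rightarrow> complex \<Rightarrow> complex \<Rightarrow> complex" where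
  "quad_tail_slope 0 \<mu> \<nu> u = 0"
| "quad_tail_slope (Suc n) \<mu> \<nu> u = quad_tail n \<mu> u + \<nu> * quad_tail_slope n \<mu> \<nu> u
     + ((\<Sum>i<n. \<nu> ^ (n - Suc i) * \<mu> ^ i) + u * quad_tail_slope n \<mu> \<nu> u)
       * (\<mu> ^ n + \<nu> ^ n + u * (quad_tail n \<mu> u + quad_tail n \<nu> u))"

lemma quad_tail_diff: "quad_tail n \<mu> u - quad_tail n \<nu> u = (\<mu> - \<nu>) * quad_tail_slope n \<mu> \<nu> u"
proof (induction n)
  case (Suc n)
  define a b where "a = quad_tail n \<mu> u" and "b = quad_tail n \<nu> u"
  have "quad_tail (Suc n) \<mu> u - quad_tail (Suc n) \<nu> u
      = (\<mu> - \<nu>) * a + \<nu> * (a - b) + ((\<mu> ^ n - \<nu> ^ n) + u * (a - b)) * (\<mu> ^ n + \<nu> ^ n + u * (a + b))"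
    by (simp add: a_def b_def power2_eq_square algebra_simps)
  also have "\<dots> = (\<mu> - \<nu>) * quad_tail_slope (Suc n) \<mu> \<nu> u"
    unfolding a_def b_def Suc power_diff_sumr2 by (simp add: algebra_simps)
  finally show ?case .
qed simp

lemma continuous_on_quad_tail [continuous_intros]:
  "continuous_on S f \<Longrightarrow> continuous_on S g \<Longrightarrow> continuous_on S (\<lambda>x. quad_tail n (f x) (g x))"
  by (induction n) (auto intro!: continuous_intros)

lemma continuous_on_quad_tail_slope [continuous_intros]:
  "continuous_on S f \<Longrightarrow> continuous_on S g \<Longrightarrow> continuous_on S (\<lambda>x. quad_tail_slope n (f x) \<nu> (g x))"
  by (induction n) (auto intro!: continuous_intros)

lemma quad_tail_slope_bounded:
  obtains M where "\<And>\<mu> u. norm \<mu> \<le> 1 \<Longrightarrow> norm u \<le> R \<Longrightarrow> norm (quad_tail_slope n \<mu> \<nu> u) \<le> M"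
proof -
  have "continuous_on (cball 0 1 \<times> cball 0 R) (\<lambda>x. quad_tail_slope n (fst x) \<nu> (snd x))"
    by (intro continuous_intros)
  then have "bounded ((\<lambda>x. quad_tail_slope n (fst x) \<nu> (snd x)) ` (cball 0 1 \<times> cball 0 R))"
    by (intro compact_imp_bounded compact_continuous_image compact_Times compact_cball)
  then show ?thesis
    using that by (force simp: bounded_iff)
qed

lemma quad_tail_poly: "\<exists>P. quad_tail n \<mu> = poly P"
proof (induction n)
  case (Suc n)
  then obtain P where "quad_tail n \<mu> = poly P" by blast
  then have "quad_tail (Suc n) \<mu> = poly (smult \<mu> P + ([:\<mu> ^ n:] + [:0, 1:] * P) ^ 2)"
    by (simp add: fun_eq_iff)
  then show ?case by blast
qed (auto intro: exI[of _ 0])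

lemma funpow_quad_perturbed:
  assumes "\<nu> ^ n = 1" "\<And>u. (quad \<nu> ^^ n) u = u + u ^ (n + 1) * H u"
  shows "(quad \<mu> ^^ n) u = \<mu> ^ n * u + u ^ (n + 1) * H u + (\<mu> - \<nu>) * u ^ 2 * quad_tail_slope n \<mu> \<nu> u"
proof -
  have "u ^ 2 * quad_tail n \<nu> u = u ^ (n + 1) * H u"
    using assms funpow_quad[where \<mu> = \<nu>] by simp
  moreover have "quad_tail n \<mu> u = quad_tail n \<nu> u + (\<mu> - \<nu>) * quad_tail_slope n \<mu> \<nu> u"
    using quad_tail_diff[where \<mu> = \<mu> and \<nu> = \<nu>] by (simp add: algebra_simps)
  ultimately show ?thesis
    by (simp add: funpow_quad distrib_left mult_ac)
qed

section \<open>The parabolic iterate at a root of unity\<close>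

lemma isCont_eq_off_point:
  fixes f g :: "'a::{perfect_space,t2_space} \<Rightarrow> 'b::t2_space"
  assumes "isCont f a" "isCont g a" "\<And>x. x \<noteq> a \<Longrightarrow> f x = g x"
  shows "f a = g a"
proof -
  have "(f \<longlongrightarrow> g a) (at a)"
    using assms(2) unfolding isCont_def by (rule tendsto_cong[THEN iffD1, rotated]) (auto simp: eventually_at_filter assms(3))
  then show ?thesis
    using assms(1) unfolding isCont_def by (rule tendsto_unique[OF at_neq_bot, rotated])
qed

lemma commutes_with_quad_root_of_unity:
  fixes F h :: "complex \<Rightarrow> complex"
  assumes "\<zeta> \<noteq> 0" "isCont h 0" "h 0 \<noteq> 0"
    and F: "\<And>u. F u = u + u ^ Suc k * h u"
    and comm: "\<And>u. F (quad \<zeta> u) = quad \<zeta> (F u)"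
  shows "\<zeta> ^ k = 1"
proof -
  have off_zero: "(\<zeta> + u) ^ Suc k * h (quad \<zeta> u) = h u * (\<zeta> + 2 * u + u ^ Suc k * h u)" if "u \<noteq> 0" for u
  proof -
    have quad_factor: "quad \<zeta> u = u * (\<zeta> + u)"
      by (simp add: quad_def power2_eq_square algebra_simps)
    have "u ^ Suc k * ((\<zeta> + u) ^ Suc k * h (quad \<zeta> u)) = quad \<zeta> u ^ Suc k * h (quad \<zeta> u)"
      unfolding quad_factor power_mult_distrib by (rule mult.assoc[symmetric])
    also have "\<dots> = F (quad \<zeta> u) - quad \<zeta> u"
      by (simp add: F)
    also have "\<dots> = quad \<zeta> (F u) - quad \<zeta> u"
      by (simp add: comm)
    also have "\<dots> = u ^ Suc k * (h u * (\<zeta> + 2 * u + u ^ Suc k * h u))"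
      unfolding F quad_def by (simp add: power2_eq_square algebra_simps)
    finally show ?thesis
      by (rule mult_left_cancel[OF power_not_zero[OF that], THEN iffD1])
  qed
  have "isCont (\<lambda>u. h (quad \<zeta> u)) 0"
    by (rule isCont_o2[where g = h]) (simp_all add: quad_def assms(2))
  then have "isCont (\<lambda>u. (\<zeta> + u) ^ Suc k * h (quad \<zeta> u)) 0"
    by (rule isCont_mult[rotated]) simp
  moreover have "isCont (\<lambda>u. h u * (\<zeta> + 2 * u + u ^ Suc k * h u)) 0"
    using assms(2) by simp
  ultimately have "(\<lambda>u. (\<zeta> + u) ^ Suc k * h (quad \<zeta> u)) 0 = (\<lambda>u. h u * (\<zeta> + 2 * u + u ^ Suc k * h u)) 0"
    using off_zero by (rule isCont_eq_off_point)
  then have "\<zeta> * \<zeta> ^ k = \<zeta> * 1"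
    using \<open>h 0 \<noteq> 0\<close> by (simp add: quad_def)
  then show ?thesis
    using \<open>\<zeta> \<noteq> 0\<close> by simp
qed

lemma exp_two_pi_i_rat_pow:
  fixes p :: int and q :: nat
  assumes "q > 0"
  shows "exp (2 * pi * \<i> * (of_int p / of_nat q + x)) ^ q = exp (2 * pi * \<i> * of_nat q * x)"
proof -
  have "exp (2 * pi * \<i> * (of_int p / of_nat q + x)) ^ q = exp (of_nat q * (2 * pi * \<i> * (of_int p / of_nat q + x)))"
    by (rule exp_of_nat_mult[symmetric])
  also have "of_nat q * (2 * pi * \<i> * (of_int p / of_nat q + x)) = (2 * of_int p * pi) * \<i> + 2 * pi * \<i> * of_nat q * x"
    using assms by (simp add: field_simps)
  also have "exp \<dots> = exp (2 * pi * \<i> * of_nat q * x)"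
    by (simp only: exp_add exp_integer_2pi[OF Ints_of_int] mult_1)
  finally show ?thesis .
qed

lemma exp_two_pi_i_rat_pow_eq_1_imp_dvd:
  fixes p :: int and q m :: nat
  assumes "q > 0" "coprime p (int q)" "exp (2 * pi * \<i> * (of_int p / of_nat q)) ^ m = 1"
  shows "q dvd m"
proof -
  have "exp (2 * pi * \<i> * (of_nat m * of_int p / of_nat q)) = 1"
    using assms(3) by (simp only: exp_of_nat_mult[symmetric]) (simp add: mult_ac)
  then obtain n :: int where "2 * pi * (real m * of_int p / real q) = 2 * pi * of_int n"
    by (auto simp: exp_eq_1)
  then have "real m * of_int p / real q = of_int n"
    by (simp only: mult_cancel_left) simp
  then have "real_of_int (int m * p) = real_of_int (n * int q)"
    using assms(1) by (simp add: field_simps)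
  then have "int q dvd int m * p"
    by (simp only: of_int_eq_iff dvd_triv_right)
  then show ?thesis
    using assms(2) by (metis coprime_commute coprime_dvd_mult_left_iff of_nat_dvd_iff)
qed

lemma funpow_quad_root_of_unity:
  fixes p :: int and q :: nat
  assumes "q > 0" "coprime p (int q)"
  defines "\<zeta> \<equiv> exp (2 * pi * \<i> * (of_int p / of_nat q))"
  obtains H :: "complex poly" where "\<And>u. (quad \<zeta> ^^ q) u = u + u ^ (q + 1) * poly H u"
proof -
  have "\<zeta> ^ q = 1"
    using exp_two_pi_i_rat_pow[OF assms(1), of p 0] by (simp add: \<zeta>_def)
  moreover obtain P where "quad_tail q \<zeta> = poly P"
    using quad_tail_poly by blast
  ultimately have F: "(quad \<zeta> ^^ q) u = u + u ^ 2 * poly P u" for u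
    by (simp add: funpow_quad)
  show ?thesis
  proof (cases "P = 0")
    case True
    then show ?thesis
      using F that[of 0] by simp
  next
    case False
    then obtain j h where P: "P = [:0, 1:] ^ j * h" and "poly h 0 \<noteq> 0"
      using order_decomp[OF False, of 0] by (auto simp: poly_eq_0_iff_dvd)
    then have F_h: "(quad \<zeta> ^^ q) u = u + u ^ Suc (Suc j) * poly h u" for u
      using F[of u] by (simp add: poly_power power2_eq_square)
    have "\<zeta> ^ Suc j = 1"
    proof (rule commutes_with_quad_root_of_unity[OF _ _ \<open>poly h 0 \<noteq> 0\<close> F_h])
      show "\<zeta> \<noteq> 0" "isCont (poly h) 0"
        by (simp_all add: \<zeta>_def)
      show "(quad \<zeta> ^^ q) (quad \<zeta> u) = quad \<zeta> ((quad \<zeta> ^^ q) u)" for u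
        by (simp add: funpow_swap1)
    qed
    then have "q dvd Suc j"
      using exp_two_pi_i_rat_pow_eq_1_imp_dvd[OF assms(1,2)] by (simp add: \<zeta>_def)
    then obtain i where "Suc j = q + i"
      using dvd_imp_le le_Suc_ex by blast
    then show ?thesis
      using F_h that[of "[:0, 1:] ^ i * h"] by (simp add: poly_power power_add mult_ac)
  qed
qed

lemma funpow_Pol_expansion:
  fixes p :: int and q :: nat
  assumes "q > 0" "coprime p (int q)"
  defines "\<zeta> \<equiv> exp (2 * pi * \<i> * (of_int p / of_nat q))"
  obtains H :: "complex poly" where "\<And>\<alpha> u. (Pol \<alpha> ^^ q) u
    = exp (2 * pi * \<i> * \<alpha>) ^ q * u + u ^ (q + 1) * poly H u
      + (exp (2 * pi * \<i> * \<alpha>) - \<zeta>) * u ^ 2 * quad_tail_slope q (exp (2 * pi * \<i> * \<alpha>)) \<zeta> u"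
proof -
  have "\<zeta> ^ q = 1"
    using exp_two_pi_i_rat_pow[OF assms(1), of p 0] by (simp add: \<zeta>_def)
  obtain H where "\<And>u. (quad \<zeta> ^^ q) u = u + u ^ (q + 1) * poly H u"
    using funpow_quad_root_of_unity[OF assms(1,2)] unfolding \<zeta>_def by blast
  from funpow_quad_perturbed[OF \<open>\<zeta> ^ q = 1\<close> this] show ?thesis
    by (intro that) (simp only: Pol_eq_quad)
qed

section \<open>Points of the cycle\<close>

lemma holomorphic_on_lipschitz_on_cball:
  assumes "f holomorphic_on S" "open S" "cball a r \<subseteq> S"
  obtains L where "L-lipschitz_on (cball a r) f"
proof -
  have "continuous_on (cball a r) (deriv f)"
    using assms by (meson holomorphic_deriv holomorphic_on_imp_continuous_on holomorphic_on_subset)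
  then obtain B where "B > 0" and B: "\<And>z. z \<in> cball a r \<Longrightarrow> norm (deriv f z) \<le> B"
    by (metis compact_cball compact_continuous_image compact_imp_bounded bounded_pos imageI)
  have "norm (f x - f y) \<le> B * norm (x - y)" if "x \<in> cball a r" "y \<in> cball a r" for x y
    using assms that B
    by (intro field_differentiable_bound[OF convex_cball, where f' = "deriv f"]) (auto intro: holomorphic_derivI)
  with \<open>B > 0\<close> show ?thesis
    by (intro that[of B] lipschitz_onI) (auto simp: dist_norm)
qed

lemma is_cycle_funpow_fixed:
  assumes "is_cycle f n S" "x \<in> S"
  shows "(f ^^ n) x = x"
proof -
  obtain z j where "x = (f ^^ j) z" "(f ^^ n) z = z"
    using assms unfolding is_cycle_def by blast
  then show ?thesis
    by (metis funpow_add add.commute comp_apply)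
qed

lemma chi_admissible_lipschitz:
  assumes "q > 0" "chi_admissible p q chi"
  obtains \<rho> L where "0 < \<rho>" "\<rho> < real q powr (- 3 / real q)" "L-lipschitz_on (cball 0 \<rho>) chi"
proof -
  define r where "r = real q powr (- 3 / real q)"
  have "0 < r"
    using assms(1) by (simp add: r_def)
  moreover have "chi holomorphic_on ball 0 r"
    using assms(2) by (simp add: chi_admissible_def Let_def r_def analytic_imp_holomorphic)
  moreover have "cball 0 (r / 2) \<subseteq> ball 0 r"
    using \<open>0 < r\<close> by auto
  ultimately show ?thesis
    using that[of "r / 2"] holomorphic_on_lipschitz_on_cball[of chi "ball 0 r" 0 "r / 2"] by (auto simp: r_def)
qed

lemma cyc_point_fixed_norm_le:
  fixes p :: int and q :: nat and \<epsilon> :: real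
  assumes "q > 0" "chi_admissible p q chi"
    and L: "L-lipschitz_on (cball 0 \<rho>) chi" and "\<rho> < real q powr (- 3 / real q)"
    and "\<epsilon> \<noteq> 0" "root q \<bar>\<epsilon>\<bar> \<le> \<rho>" "x \<in> cyc p q chi (of_int p / of_nat q + of_real \<epsilon>)"
  shows "x \<noteq> 0 \<and> (Pol (of_int p / of_nat q + of_real \<epsilon>) ^^ q) x = x \<and> norm x \<le> L * root q \<bar>\<epsilon>\<bar>"
proof -
  define \<zeta> where "\<zeta> = exp (2 * pi * \<i> * (of_int p / of_nat q))"
  obtain \<delta> where \<delta>: "\<delta> ^ q = of_real \<epsilon>" "x = chi \<delta>"
    using assms(7) by (auto simp: cyc_def)
  have "norm \<delta> ^ q = \<bar>\<epsilon>\<bar>"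
    using arg_cong[OF \<delta>(1), of norm] by (simp add: norm_power)
  then have "norm \<delta> = root q \<bar>\<epsilon>\<bar>"
    using real_root_pos_unique[OF assms(1) norm_ge_zero] by metis
  then have "\<delta> \<in> cball 0 \<rho>" "\<delta> \<in> ball 0 (real q powr (- 3 / real q))"
    using assms(4,6) by auto
  moreover have "\<delta> \<noteq> 0"
    using \<delta>(1) \<open>\<epsilon> \<noteq> 0\<close> assms(1) by (metis of_real_eq_0_iff zero_power)
  ultimately have "chi 0 = 0" "chi \<delta> \<noteq> 0"
    and cycle: "is_cycle (Pol (of_int p / of_nat q + of_real \<epsilon>)) q {chi (\<zeta> ^ k * \<delta>) | k. k < q}"
    using assms(2) by (auto simp: chi_admissible_def Let_def \<zeta>_def \<delta>(1) simp del: of_real_divide)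
  have "chi \<delta> \<in> {chi (\<zeta> ^ k * \<delta>) | k. k < q}"
    using assms(1) by (auto intro!: exI[of _ 0])
  moreover have "0 \<in> cball 0 \<rho>"
    using \<open>\<delta> \<in> cball 0 \<rho>\<close> by (auto intro: order_trans[OF norm_ge_zero])
  then have "norm (chi \<delta>) \<le> L * norm \<delta>"
    using lipschitz_onD[OF L \<open>\<delta> \<in> cball 0 \<rho>\<close>, of 0] \<open>chi 0 = 0\<close> by (simp add: dist_norm)
  ultimately show ?thesis
    using \<open>chi \<delta> \<noteq> 0\<close> is_cycle_funpow_fixed[OF cycle] \<delta>(2) \<open>norm \<delta> = root q \<bar>\<epsilon>\<bar>\<close> by simp
qed

lemma cyc_points_eventually_fixed_small:
  fixes p :: int and q :: nat and chi :: "complex \<Rightarrow> complex" and z :: "real \<Rightarrow> complex"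
  assumes "q > 0" "chi_admissible p q chi"
    and "eventually (\<lambda>\<epsilon>. z \<epsilon> \<in> cyc p q chi (of_int p / of_nat q + of_real \<epsilon>)) (at 0)"
  obtains C where "(z \<longlongrightarrow> 0) (at 0)"
    and "eventually (\<lambda>\<epsilon>. z \<epsilon> \<noteq> 0 \<and> (Pol (of_int p / of_nat q + of_real \<epsilon>) ^^ q) (z \<epsilon>) = z \<epsilon>
                         \<and> norm (z \<epsilon> ^ q) \<le> C * \<bar>\<epsilon>\<bar>) (at 0)"
proof -
  obtain \<rho> L where "0 < \<rho>" "\<rho> < real q powr (- 3 / real q)" "L-lipschitz_on (cball 0 \<rho>) chi"
    using chi_admissible_lipschitz[OF assms(1,2)] by blast
  have root: "((\<lambda>\<epsilon>. root q \<bar>\<epsilon>\<bar>) \<longlongrightarrow> 0) (at 0)"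
    by (auto intro!: tendsto_eq_intros)
  have "eventually (\<lambda>\<epsilon>. \<epsilon> \<noteq> 0 \<and> root q \<bar>\<epsilon>\<bar> < \<rho>) (at 0)"
    using order_tendstoD(2)[OF root \<open>0 < \<rho>\<close>] eventually_neq_at_within[of 0 0 UNIV]
    by (auto elim: eventually_elim2)
  with assms(3) have bound: "eventually (\<lambda>\<epsilon>. z \<epsilon> \<noteq> 0 \<and> (Pol (of_int p / of_nat q + of_real \<epsilon>) ^^ q) (z \<epsilon>) = z \<epsilon>
      \<and> norm (z \<epsilon>) \<le> L * root q \<bar>\<epsilon>\<bar>) (at 0)"
    by eventually_elim (rule cyc_point_fixed_norm_le[OF assms(1,2) \<open>L-lipschitz_on (cball 0 \<rho>) chi\<close> \<open>\<rho> < _\<close>]; simp)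
  show ?thesis
  proof (rule that[of "L ^ q"])
    have "eventually (\<lambda>\<epsilon>. norm (z \<epsilon>) \<le> L * root q \<bar>\<epsilon>\<bar>) (at 0)"
      using bound by (rule eventually_mono) blast
    then show "(z \<longlongrightarrow> 0) (at 0)"
      by (rule Lim_null_comparison) (rule tendsto_mult_right_zero[OF root])
    show "eventually (\<lambda>\<epsilon>. z \<epsilon> \<noteq> 0 \<and> (Pol (of_int p / of_nat q + of_real \<epsilon>) ^^ q) (z \<epsilon>) = z \<epsilon>
        \<and> norm (z \<epsilon> ^ q) \<le> L ^ q * \<bar>\<epsilon>\<bar>) (at 0)"
      using bound
    proof eventually_elim
      case (elim \<epsilon>)
      then have "norm (z \<epsilon> ^ q) \<le> (L * root q \<bar>\<epsilon>\<bar>) ^ q"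
        unfolding norm_power by (intro power_mono) simp_all
      also have "\<dots> = L ^ q * \<bar>\<epsilon>\<bar>"
        using assms(1) by (simp add: power_mult_distrib)
      finally show ?case
        using elim by blast
    qed
  qed
qed

section \<open>The rescaled first-return map\<close>

lemma norm_exp_two_pi_i_real:
  assumes "\<alpha> \<in> \<real>"
  shows "norm (exp (2 * pi * \<i> * \<alpha>)) = 1"
  using assms by (auto elim!: Reals_cases simp: norm_exp_eq_Re)

lemma norm_exp_two_pi_i_diff_le:
  assumes "\<alpha> \<in> \<real>"
  shows "norm (exp (2 * pi * \<i> * (\<alpha> + of_real t)) - exp (2 * pi * \<i> * \<alpha>)) \<le> 2 * pi * \<bar>t\<bar>"
proof -
  have "exp (2 * pi * \<i> * (\<alpha> + of_real t)) - exp (2 * pi * \<i> * \<alpha>)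
      = exp (2 * pi * \<i> * \<alpha>) * (exp (\<i> * of_real (2 * pi * t)) - 1)"
    by (simp add: distrib_left exp_add right_diff_distrib mult_ac)
  then have "norm (exp (2 * pi * \<i> * (\<alpha> + of_real t)) - exp (2 * pi * \<i> * \<alpha>)) = 2 * \<bar>sin (2 * pi * t / 2)\<bar>"
    by (simp only: norm_mult norm_exp_two_pi_i_real[OF assms] dist_exp_i_1 mult_1)
  also have "\<dots> \<le> 2 * pi * \<bar>t\<bar>"
    using abs_sin_x_le_abs_x[of "2 * pi * t / 2"] by (simp add: abs_mult)
  finally show ?thesis .
qed

lemma tendsto_exp_remainder_over_real:
  fixes c :: complex
  shows "((\<lambda>\<epsilon>::real. (exp (c * of_real \<epsilon>) - 1 - c * of_real \<epsilon>) / of_real \<epsilon>) \<longlongrightarrow> 0) (at 0)"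
proof -
  have "((\<lambda>h. exp (c * h) - c * h) has_field_derivative c * exp (c * 0) - c) (at 0)"
    by (auto intro!: derivative_eq_intros)
  from DERIV_D[OF this] have remainder: "((\<lambda>h. (exp (c * h) - 1 - c * h) / h) \<longlongrightarrow> 0) (at 0)"
    by (simp add: diff_diff_eq add.commute)
  have of_real: "((\<lambda>\<epsilon>::real. of_real \<epsilon> :: complex) \<longlongrightarrow> 0) (at 0)"
    by (auto intro!: tendsto_eq_intros)
  have nonzero: "\<exists>d>0. \<forall>\<epsilon>::real. \<epsilon> \<noteq> 0 \<and> norm (\<epsilon> - 0) < d \<longrightarrow> (of_real \<epsilon> :: complex) \<noteq> 0"
    by (intro exI[of _ 1]) simp
  show ?thesis
    using LIM_compose2[OF of_real remainder nonzero] by simp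
qed

lemma tendsto_exp_two_pi_i_rat_remainder:
  fixes p :: int and q :: nat
  assumes "q > 0"
  shows "((\<lambda>\<epsilon>::real. (exp (2 * pi * \<i> * (of_int p / of_nat q + of_real \<epsilon>)) ^ q - 1
            - 2 * \<i> * pi * of_nat q * of_real \<epsilon>) / of_real \<epsilon>) \<longlongrightarrow> 0) (at 0)"
  unfolding exp_two_pi_i_rat_pow[OF assms]
  using tendsto_exp_remainder_over_real[of "2 * pi * \<i> * of_nat q"] by (simp add: mult_ac)

lemma funpow_rescale:
  fixes f :: "'a::field \<Rightarrow> 'a"
  assumes "z \<noteq> 0"
  shows "((\<lambda>u. f (z * u) / z) ^^ n) w = (f ^^ n) (z * w) / z"
  using assms by (induction n) auto

lemma rescaled_fixed_point_identity:
  fixes F H K :: "'a::field \<Rightarrow> 'a"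
  assumes F: "\<And>u. F u = a * u + u ^ (q + 1) * H u + d * u ^ 2 * K u"
    and "F z = z" "z \<noteq> 0"
  shows "F (z * w) / z - w - c * w * (1 - w ^ q)
    = (a - 1 - c) * (w - w ^ (q + 1)) + z ^ q * w ^ (q + 1) * (H (z * w) - H z)
      + d * z * (w ^ 2 * K (z * w) - w ^ (q + 1) * K z)"
proof -
  have "z * (a + z ^ q * H z + d * z * K z) = z * 1"
    using \<open>F z = z\<close> F[of z] by (simp add: algebra_simps power2_eq_square)
  then have fixed: "a + z ^ q * H z + d * z * K z = 1"
    by (rule mult_left_cancel[OF \<open>z \<noteq> 0\<close>, THEN iffD1])
  have "F (z * w) / z = a * w + z ^ q * w ^ (q + 1) * H (z * w) + d * z * w ^ 2 * K (z * w)"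
    using \<open>z \<noteq> 0\<close> by (simp add: F field_simps power_mult_distrib power2_eq_square)
  also have "\<dots> = w + c * w * (1 - w ^ q) + (a - 1 - c) * (w - w ^ (q + 1))
      + z ^ q * w ^ (q + 1) * (H (z * w) - H z) + d * z * (w ^ 2 * K (z * w) - w ^ (q + 1) * K z)
      + w ^ (q + 1) * (a + z ^ q * H z + d * z * K z - 1)"
    by (simp add: algebra_simps)
  finally show ?thesis
    by (simp add: fixed)
qed

lemma lipschitz_on_cball_rescaled_diff:
  fixes H :: "complex \<Rightarrow> complex"
  assumes H: "L-lipschitz_on (cball 0 R) H" and "norm z \<le> 1" "norm w \<le> R" "1 \<le> R"
  shows "norm (H (z * w) - H z) \<le> L * (R + 1) * norm z"
proof -
  have "norm (z * w) \<le> R" "norm z \<le> R"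
    using assms(2-4) mult_mono[of "norm z" 1 "norm w" R] by (auto simp: norm_mult)
  then have "norm (H (z * w) - H z) \<le> L * norm (z * (w - 1))"
    using lipschitz_onD[OF H, of "z * w" z] by (simp add: dist_norm algebra_simps)
  also have "\<dots> \<le> L * ((R + 1) * norm z)"
    using lipschitz_on_nonneg[OF H] \<open>norm w \<le> R\<close> norm_triangle_ineq4[of w 1]
    by (intro mult_left_mono) (auto simp: norm_mult mult.commute intro!: mult_left_mono)
  finally show ?thesis
    by (simp add: mult_ac)
qed

lemma rescaled_fixed_point_estimate:
  fixes F H K :: "complex \<Rightarrow> complex"
  assumes F: "\<And>u. F u = a * u + u ^ (q + 1) * H u + d * u ^ 2 * K u"
    and "F z = z" "z \<noteq> 0" "norm z \<le> 1" "norm w \<le> R" "1 \<le> R"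
    and H: "L-lipschitz_on (cball 0 R) H"
    and K: "\<And>u. norm u \<le> R \<Longrightarrow> norm (K u) \<le> M"
  shows "norm (F (z * w) / z - w - c * w * (1 - w ^ q))
    \<le> norm (a - 1 - c) * (R + R ^ (q + 1))
      + (norm (z ^ q) * L * (R + 1) * R ^ (q + 1) + norm d * M * (R ^ 2 + R ^ (q + 1))) * norm z"
proof -
  have wq: "norm (w ^ (q + 1)) \<le> R ^ (q + 1)" and w2: "norm (w ^ 2) \<le> R ^ 2"
    unfolding norm_power using \<open>norm w \<le> R\<close> by (meson norm_ge_zero power_mono)+
  have zw: "norm (z * w) \<le> R" and "norm z \<le> R"
    using \<open>norm z \<le> 1\<close> \<open>norm w \<le> R\<close> \<open>1 \<le> R\<close> mult_mono[of "norm z" 1 "norm w" R]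
    by (auto simp: norm_mult)
  have "norm (w - w ^ (q + 1)) \<le> R + R ^ (q + 1)"
    using norm_triangle_ineq4[of w "w ^ (q + 1)"] \<open>norm w \<le> R\<close> wq by linarith
  then have t1: "norm ((a - 1 - c) * (w - w ^ (q + 1))) \<le> norm (a - 1 - c) * (R + R ^ (q + 1))"
    by (simp add: norm_mult mult_left_mono)
  have "norm (w ^ (q + 1) * (H (z * w) - H z)) \<le> R ^ (q + 1) * (L * (R + 1) * norm z)"
    unfolding norm_mult using wq \<open>1 \<le> R\<close>
      lipschitz_on_cball_rescaled_diff[OF H \<open>norm z \<le> 1\<close> \<open>norm w \<le> R\<close> \<open>1 \<le> R\<close>]
    by (intro mult_mono) (auto simp del: power_Suc)
  then have "norm (z ^ q) * norm (w ^ (q + 1) * (H (z * w) - H z))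
      \<le> norm (z ^ q) * (R ^ (q + 1) * (L * (R + 1) * norm z))"
    by (rule mult_left_mono) simp
  then have t2: "norm (z ^ q * w ^ (q + 1) * (H (z * w) - H z)) \<le> norm (z ^ q) * L * (R + 1) * R ^ (q + 1) * norm z"
    by (simp add: norm_mult mult_ac)
  have "norm (K 0) \<le> M"
    using \<open>1 \<le> R\<close> by (intro K) simp
  then have "norm (w ^ 2 * K (z * w)) \<le> R ^ 2 * M" "norm (w ^ (q + 1) * K z) \<le> R ^ (q + 1) * M"
    unfolding norm_mult using w2 wq K zw \<open>norm z \<le> R\<close> \<open>1 \<le> R\<close>
    by (auto intro!: mult_mono intro: order_trans[OF norm_ge_zero])
  then have "norm (w ^ 2 * K (z * w) - w ^ (q + 1) * K z) \<le> M * (R ^ 2 + R ^ (q + 1))"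
    using norm_triangle_ineq4[of "w ^ 2 * K (z * w)" "w ^ (q + 1) * K z"] by (simp add: algebra_simps)
  then have "norm (d * z) * norm (w ^ 2 * K (z * w) - w ^ (q + 1) * K z) \<le> norm (d * z) * (M * (R ^ 2 + R ^ (q + 1)))"
    by (rule mult_left_mono) simp
  then have t3: "norm (d * z * (w ^ 2 * K (z * w) - w ^ (q + 1) * K z)) \<le> norm d * M * (R ^ 2 + R ^ (q + 1)) * norm z"
    by (simp add: norm_mult mult_ac)
  have "norm (X1 + X2 + X3) \<le> norm X1 + norm X2 + norm X3" for X1 X2 X3 :: complex
    by (rule norm_triangle_le[OF add_mono[OF norm_triangle_ineq order_refl]])
  from this[of "(a - 1 - c) * (w - w ^ (q + 1))" "z ^ q * w ^ (q + 1) * (H (z * w) - H z)"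
      "d * z * (w ^ 2 * K (z * w) - w ^ (q + 1) * K z)"] show ?thesis
    unfolding rescaled_fixed_point_identity[OF F \<open>F z = z\<close> \<open>z \<noteq> 0\<close>]
    using t1 t2 t3 distrib_right[of "norm (z ^ q) * L * (R + 1) * R ^ (q + 1)" "norm d * M * (R ^ 2 + R ^ (q + 1))" "norm z"]
    by linarith
qed

lemma rescaled_Pol_iterate_estimate:
  fixes p :: int and q :: nat and \<epsilon> :: real and H :: "complex poly"
  defines "\<alpha> \<equiv> of_int p / of_nat q + of_real \<epsilon>"
    and "\<zeta> \<equiv> exp (2 * pi * \<i> * (of_int p / of_nat q))"
    and "\<mu> \<equiv> exp (2 * pi * \<i> * (of_int p / of_nat q + of_real \<epsilon>))"
  assumes F: "\<And>u. (Pol \<alpha> ^^ q) u = \<mu> ^ q * u + u ^ (q + 1) * poly H u + (\<mu> - \<zeta>) * u ^ 2 * quad_tail_slope q \<mu> \<zeta> u"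
    and "(Pol \<alpha> ^^ q) z = z" "z \<noteq> 0" "norm z \<le> 1" "norm (z ^ q) \<le> C * \<bar>\<epsilon>\<bar>" "norm w \<le> R" "1 \<le> R"
    and L: "L-lipschitz_on (cball 0 R) (poly H)"
    and M: "\<And>\<nu> u. norm \<nu> \<le> 1 \<Longrightarrow> norm u \<le> R \<Longrightarrow> norm (quad_tail_slope q \<nu> \<zeta> u) \<le> M"
  shows "norm ((((\<lambda>u. Pol \<alpha> (z * u) / z) ^^ q) w - w - 2 * \<i> * pi * of_nat q * of_real \<epsilon> * w * (1 - w ^ q)) / of_real \<epsilon>)
    \<le> norm ((\<mu> ^ q - 1 - 2 * \<i> * pi * of_nat q * of_real \<epsilon>) / of_real \<epsilon>) * (R + R ^ (q + 1))
      + (C * L * (R + 1) * R ^ (q + 1) + 2 * pi * M * (R ^ 2 + R ^ (q + 1))) * norm z"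
proof -
  have "\<bar>\<epsilon>\<bar> > 0"
    using \<open>norm (z ^ q) \<le> C * \<bar>\<epsilon>\<bar>\<close> \<open>z \<noteq> 0\<close> by (auto simp: order.antisym)
  have "norm \<mu> = 1"
    unfolding \<mu>_def by (rule norm_exp_two_pi_i_real) simp
  have "norm (\<mu> - \<zeta>) \<le> 2 * pi * \<bar>\<epsilon>\<bar>"
    unfolding \<mu>_def \<zeta>_def using norm_exp_two_pi_i_diff_le[of "of_int p / of_nat q" \<epsilon>] by simp
  have "0 \<le> L" "0 \<le> M"
    using lipschitz_on_nonneg[OF L] M[of 0 0] \<open>1 \<le> R\<close> by (auto intro: order_trans[OF norm_ge_zero])
  have "norm (z ^ q) * L * (R + 1) * R ^ (q + 1) + norm (\<mu> - \<zeta>) * M * (R ^ 2 + R ^ (q + 1))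
      \<le> C * \<bar>\<epsilon>\<bar> * L * (R + 1) * R ^ (q + 1) + 2 * pi * \<bar>\<epsilon>\<bar> * M * (R ^ 2 + R ^ (q + 1))"
    using \<open>norm (z ^ q) \<le> C * \<bar>\<epsilon>\<bar>\<close> \<open>norm (\<mu> - \<zeta>) \<le> 2 * pi * \<bar>\<epsilon>\<bar>\<close> \<open>0 \<le> L\<close> \<open>0 \<le> M\<close> \<open>1 \<le> R\<close>
    by (intro add_mono mult_right_mono) simp_all
  also have "\<dots> = \<bar>\<epsilon>\<bar> * (C * L * (R + 1) * R ^ (q + 1) + 2 * pi * M * (R ^ 2 + R ^ (q + 1)))"
    by (simp add: algebra_simps)
  finally have "norm (z ^ q) * L * (R + 1) * R ^ (q + 1) + norm (\<mu> - \<zeta>) * M * (R ^ 2 + R ^ (q + 1))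
      \<le> \<bar>\<epsilon>\<bar> * (C * L * (R + 1) * R ^ (q + 1) + 2 * pi * M * (R ^ 2 + R ^ (q + 1)))" .
  from mult_right_mono[OF this norm_ge_zero[of z]] have
    "norm (((\<lambda>u. Pol \<alpha> (z * u) / z) ^^ q) w - w - 2 * \<i> * pi * of_nat q * of_real \<epsilon> * w * (1 - w ^ q))
      \<le> norm (\<mu> ^ q - 1 - 2 * \<i> * pi * of_nat q * of_real \<epsilon>) * (R + R ^ (q + 1))
        + \<bar>\<epsilon>\<bar> * ((C * L * (R + 1) * R ^ (q + 1) + 2 * pi * M * (R ^ 2 + R ^ (q + 1))) * norm z)"
    (is "norm ?X \<le> ?A + _ * ?Y")
    using rescaled_fixed_point_estimate[OF F assms(5-7,9,10) L M[of \<mu>], of "2 * \<i> * pi * of_nat q * of_real \<epsilon>"]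
      \<open>norm \<mu> = 1\<close>
    by (simp add: funpow_rescale[OF \<open>z \<noteq> 0\<close>] mult.assoc)
  then have "norm (?X / of_real \<epsilon>) \<le> (?A + \<bar>\<epsilon>\<bar> * ?Y) / \<bar>\<epsilon>\<bar>"
    by (simp add: norm_divide divide_right_mono)
  also have "\<dots> = ?A / \<bar>\<epsilon>\<bar> + ?Y"
    using \<open>\<bar>\<epsilon>\<bar> > 0\<close> by (simp add: add_divide_distrib)
  finally show ?thesis
    by (simp add: norm_divide)
qed

lemma uniform_limit_null_if_norm_le:
  assumes "eventually P F" "\<And>x y. P x \<Longrightarrow> y \<in> S \<Longrightarrow> norm (f x y) \<le> b x" "(b \<longlongrightarrow> 0) F"
  shows "uniform_limit S f (\<lambda>_. 0) F"
proof (rule uniform_limit_null_comparison)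
  show "\<forall>\<^sub>F x in F. \<forall>y\<in>S. norm (f x y) \<le> b x"
    using assms(1,2) by (auto elim: eventually_mono)
  show "uniform_limit S (\<lambda>x _. b x) (\<lambda>_. 0) F"
    using assms(3) by (fastforce simp: uniform_limit_iff tendsto_iff elim: eventually_mono)
qed

theorem lemma5:
  fixes p :: int and q :: nat and chi :: "complex \<Rightarrow> complex"
    and z :: "real \<Rightarrow> complex" and K :: "complex set"
  assumes "q > 0" and "coprime p (int q)"
    and "chi_admissible p q chi"
    and "eventually (\<lambda>\<epsilon>. z \<epsilon> \<in> cyc p q chi (of_int p / of_nat q + of_real \<epsilon>)) (at 0)"
    and "compact K"
  shows "uniform_limit K
           (\<lambda>\<epsilon> w. (((\<lambda>u. Pol (of_int p / of_nat q + of_real \<epsilon>) (z \<epsilon> * u) / z \<epsilon>) ^^ q) w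
                     - w - 2 * \<i> * pi * of_nat q * of_real \<epsilon> * w * (1 - w ^ q)) / of_real \<epsilon>)
           (\<lambda>w. 0) (at 0)"
proof -
  define \<zeta> where "\<zeta> = exp (2 * pi * \<i> * (of_int p / of_nat q))"
  define \<mu> where "\<mu> \<epsilon> = exp (2 * pi * \<i> * (of_int p / of_nat q + of_real \<epsilon>))" for \<epsilon> :: real
  obtain H where H: "\<And>\<alpha> u. (Pol \<alpha> ^^ q) u = exp (2 * pi * \<i> * \<alpha>) ^ q * u + u ^ (q + 1) * poly H u
      + (exp (2 * pi * \<i> * \<alpha>) - \<zeta>) * u ^ 2 * quad_tail_slope q (exp (2 * pi * \<i> * \<alpha>)) \<zeta> u"
    using funpow_Pol_expansion[OF assms(1,2)] unfolding \<zeta>_def by blast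
  obtain C where "(z \<longlongrightarrow> 0) (at 0)" and fixed: "eventually (\<lambda>\<epsilon>. z \<epsilon> \<noteq> 0
      \<and> (Pol (of_int p / of_nat q + of_real \<epsilon>) ^^ q) (z \<epsilon>) = z \<epsilon> \<and> norm (z \<epsilon> ^ q) \<le> C * \<bar>\<epsilon>\<bar>) (at 0)"
    using cyc_points_eventually_fixed_small[OF assms(1,3,4)] by blast
  have small: "eventually (\<lambda>\<epsilon>. norm (z \<epsilon>) \<le> 1) (at 0)"
    using order_tendstoD(2)[OF tendsto_norm[OF \<open>(z \<longlongrightarrow> 0) (at 0)\<close>], of 1] by (auto elim: eventually_mono)
  obtain R where "1 \<le> R" and R: "\<And>w. w \<in> K \<Longrightarrow> norm w \<le> R"
    using compact_imp_bounded[OF assms(5)] by (metis bounded_iff max.cobounded1 max.coboundedI2)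
  obtain L where L: "L-lipschitz_on (cball 0 R) (poly H)"
    by (rule holomorphic_on_lipschitz_on_cball[of "poly H" UNIV]) (auto intro: poly_holomorphic_on[of "\<lambda>u. u", simplified])
  obtain M where M: "\<And>\<nu> u. norm \<nu> \<le> 1 \<Longrightarrow> norm u \<le> R \<Longrightarrow> norm (quad_tail_slope q \<nu> \<zeta> u) \<le> M"
    using quad_tail_slope_bounded by blast
  define b where "b \<epsilon> = norm ((\<mu> \<epsilon> ^ q - 1 - 2 * \<i> * pi * of_nat q * of_real \<epsilon>) / of_real \<epsilon>) * (R + R ^ (q + 1))
      + (C * L * (R + 1) * R ^ (q + 1) + 2 * pi * M * (R ^ 2 + R ^ (q + 1))) * norm (z \<epsilon>)" for \<epsilon>
  show ?thesis
  proof (rule uniform_limit_null_if_norm_le[OF eventually_conj[OF fixed small], where b = b], goal_cases)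
    case (1 \<epsilon> w)
    then show ?case
      using rescaled_Pol_iterate_estimate[OF H[unfolded \<zeta>_def] _ _ _ _ _ \<open>1 \<le> R\<close> L M[unfolded \<zeta>_def],
        where z = "z \<epsilon>" and C = C and w = w] R
      by (auto simp: b_def \<mu>_def)
  next
    case 2
    have "((\<lambda>\<epsilon>. (\<mu> \<epsilon> ^ q - 1 - 2 * \<i> * pi * of_nat q * of_real \<epsilon>) / of_real \<epsilon>) \<longlongrightarrow> 0) (at 0)"
      unfolding \<mu>_def by (rule tendsto_exp_two_pi_i_rat_remainder[OF assms(1)])
    with \<open>(z \<longlongrightarrow> 0) (at 0)\<close> show ?case
      unfolding b_def by (intro tendsto_add_zero tendsto_mult_left_zero tendsto_mult_right_zero tendsto_norm_zero)
  qed
qed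

end
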